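(* Let $\mathcal M$ be the set of pairs of measurable functions $(\mu(\cdot),\sigma(\cdot))$ from $[0,1]$ into $D$. Then $$\inf_{(\mu,\sigma)\in\mathcal M}\frac{\Big(\int_0^1\big(h_0\mu(\omega)+h_1\sigma(\omega)\big)\,d\omega\Big)^2}{\int_0^1\big(\mu^2(\omega)+\sigma^2(\omega)\big)\,d\omega}=\min_{(x,y)\in D}\psi(x,y),$$ and the infimum on the left is attained.
   Context: Let $0<\mu_-<\mu_+$ and $0<\sigma_-<\sigma_+$ be real numbers, $D=[\mu_-,\mu_+]\times[\sigma_-,\sigma_+]$, and $h_0,h_1\in\mathbb R$. Write $\mu_M=(\mu_++\mu_-)/2$ and $\sigma_M=(\sigma_++\sigma_-)/2$. For $(x,y)\in D$ let $$\psi(x,y)=\frac{(h_0x+h_1y)^2}{2\mu_Mx+2\sigma_My-\mu_-\mu_+-\sigma_-\sigma_+};$$ the denominator is positive on $D$. *)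

theory Defs
  imports "HOL-Analysis.Analysis"
begin

definition psi :: "real \<Rightarrow> real \<Rightarrow> real \<Rightarrow> real \<Rightarrow> real \<Rightarrow> real \<Rightarrow> real \<Rightarrow> real \<Rightarrow> real" where
  "psi mu_m mu_p sg_m sg_p h0 h1 x y =
     (h0 * x + h1 * y)^2 /
     (2 * ((mu_p + mu_m) / 2) * x + 2 * ((sg_p + sg_m) / 2) * y - mu_m * mu_p - sg_m * sg_p)"

definition admissible :: "real \<Rightarrow> real \<Rightarrow> real \<Rightarrow> real \<Rightarrow> (real \<Rightarrow> real) \<Rightarrow> (real \<Rightarrow> real) \<Rightarrow> bool" where
  "admissible mu_m mu_p sg_m sg_p m s \<longleftrightarrow>
     set_borel_measurable lebesgue {0..1} m \<and> set_borel_measurable lebesgue {0..1} s \<and>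
     (\<forall>w\<in>{0..1}. (m w, s w) \<in> {mu_m..mu_p} \<times> {sg_m..sg_p})"

definition ratio :: "real \<Rightarrow> real \<Rightarrow> (real \<Rightarrow> real) \<Rightarrow> (real \<Rightarrow> real) \<Rightarrow> real" where
  "ratio h0 h1 m s =
     (LINT w:{0..1}|lebesgue. h0 * m w + h1 * s w)^2 /
     (LINT w:{0..1}|lebesgue. (m w)^2 + (s w)^2)"

end

theory Submission
  imports Defs
begin

(* Write E f for the integral of f over [0,1] (Lebesgue measure, total mass 1).
   For a measurable m with values in [a,b] one has (m - a)(m - b) \<le> 0 pointwise, hence
   E m\<^sup>2 \<le> (a+b) E m - ab; equality holds for the two-valued function that equals b on an
   initial segment of length (E m - a)/(b - a) and a elsewhere.  Adding the two bounds for
   \<mu> and \<sigma>, the denominator of the ratio is at most the denominator of \<psi> at the point of means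
   (E \<mu>, E \<sigma>) \<in> D, while the numerators coincide; so every ratio is \<ge> \<psi>(E \<mu>, E \<sigma>) \<ge> min \<psi>,
   and the two-valued pair with means at a minimiser of \<psi> attains this value. *)

lemma set_integrable_unit_const: "set_integrable lebesgue {0..1::real} (\<lambda>_. c::real)"
  unfolding set_integrable_def
  by (rule integrable_scaleR_left) (simp add: emeasure_lborel_Icc_eq)

lemma set_integrable_unit_bounded:
  fixes f :: "real \<Rightarrow> real"
  assumes "set_borel_measurable lebesgue {0..1} f" "\<And>w. w \<in> {0..1} \<Longrightarrow> \<bar>f w\<bar> \<le> B"
  shows "set_integrable lebesgue {0..1} f"
proof (rule set_integrable_bound[OF set_integrable_unit_const[of B]])
  show "AE x in lebesgue. x \<in> {0..1} \<longrightarrow> norm (f x) \<le> norm B"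
    using assms(2) by (intro AE_I2) (auto intro: order_trans[OF _ abs_ge_self])
qed (fact assms(1))

lemma set_integral_unit_const: "(LINT w:{0..1::real}|lebesgue. (c::real)) = c"
  using set_integral_const[of "{0..1::real}" lebesgue c] by (simp add: emeasure_lborel_Icc_eq)

lemma set_integral_unit_indicator:
  assumes "0 \<le> t" "t \<le> 1"
  shows "(LINT w:{0..1::real}|lebesgue. indicator {0..t} w) = t"
proof -
  have "(LINT w:{0..1::real}|lebesgue. indicator {0..t} w)
          = integral\<^sup>L lebesgue (indicator {0..t} :: real \<Rightarrow> real)"
    unfolding set_lebesgue_integral_def using assms
    by (intro Bochner_Integration.integral_cong) (auto split: split_indicator)
  also have "\<dots> = t" using assms by (simp add: emeasure_lborel_Icc_eq)
  finally show ?thesis .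
qed

lemma set_integral_unit_lower:
  assumes "set_integrable lebesgue {0..1::real} f" "\<And>w. w \<in> {0..1} \<Longrightarrow> c \<le> (f w::real)"
  shows "c \<le> (LINT w:{0..1}|lebesgue. f w)"
  using set_integral_mono[OF set_integrable_unit_const assms(1), of c] assms(2)
  by (simp add: set_integral_unit_const)

lemma set_integral_unit_upper:
  assumes "set_integrable lebesgue {0..1::real} f" "\<And>w. w \<in> {0..1} \<Longrightarrow> (f w::real) \<le> c"
  shows "(LINT w:{0..1}|lebesgue. f w) \<le> c"
  using set_integral_mono[OF assms(1) set_integrable_unit_const, of c] assms(2)
  by (simp add: set_integral_unit_const)

lemma set_borel_measurable_square:
  fixes f :: "real \<Rightarrow> real"
  assumes "set_borel_measurable lebesgue A f"
  shows "set_borel_measurable lebesgue A (\<lambda>w. f w ^ 2)"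
proof -
  have "(\<lambda>w. indicator A w *\<^sub>R f w ^ 2) = (\<lambda>w. (indicator A w *\<^sub>R f w) * (indicator A w *\<^sub>R f w))"
    by (auto simp: indicator_def power2_eq_square)
  then show ?thesis using assms unfolding set_borel_measurable_def by simp measurable
qed

text \<open>A measurable function on [0,1] with values in [a,b], 0 < a, is square integrable, its
  mean lies in [a,b], and its second moment lies between a^2 and (a+b) E m - ab; the upper
  bound integrates the pointwise inequality (m - a)(m - b) \<le> 0.\<close>
lemma second_moment_bound:
  fixes m :: "real \<Rightarrow> real"
  assumes "0 < a" and meas: "set_borel_measurable lebesgue {0..1} m"
    and range: "\<And>w. w \<in> {0..1} \<Longrightarrow> a \<le> m w \<and> m w \<le> b"
  shows "set_integrable lebesgue {0..1} m" "set_integrable lebesgue {0..1} (\<lambda>w. m w ^ 2)"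
    "a \<le> (LINT w:{0..1}|lebesgue. m w)" "(LINT w:{0..1}|lebesgue. m w) \<le> b"
    "a^2 \<le> (LINT w:{0..1}|lebesgue. m w ^ 2)"
    "(LINT w:{0..1}|lebesgue. m w ^ 2) \<le> (a+b) * (LINT w:{0..1}|lebesgue. m w) - a*b"
proof -
  have nonneg: "0 \<le> m w" "m w \<le> b" if "w \<in> {0..1}" for w
    using assms(1) range[OF that] by auto
  show int_m: "set_integrable lebesgue {0..1} m"
    by (rule set_integrable_unit_bounded[OF meas, of b]) (use nonneg in fastforce)
  show int_sq: "set_integrable lebesgue {0..1} (\<lambda>w. m w ^ 2)"
    by (rule set_integrable_unit_bounded[OF set_borel_measurable_square[OF meas], of "b^2"])
       (simp add: nonneg power_mono)
  show "a \<le> (LINT w:{0..1}|lebesgue. m w)" "(LINT w:{0..1}|lebesgue. m w) \<le> b"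
    using range by (auto intro: set_integral_unit_lower set_integral_unit_upper int_m)
  show "a^2 \<le> (LINT w:{0..1}|lebesgue. m w ^ 2)"
    using assms(1) range by (intro set_integral_unit_lower[OF int_sq]) (simp add: power_mono)
  have "(LINT w:{0..1}|lebesgue. m w ^ 2) \<le> (LINT w:{0..1}|lebesgue. (a+b) * m w - a*b)"
  proof (rule set_integral_mono[OF int_sq])
    show "set_integrable lebesgue {0..1} (\<lambda>w. (a+b) * m w - a*b)"
      using int_m set_integrable_unit_const by auto
    fix w :: real assume "w \<in> {0..1}"
    then have "(m w - a) * (m w - b) \<le> 0" using range by (simp add: mult_nonneg_nonpos)
    then show "m w ^ 2 \<le> (a+b) * m w - a*b" by (simp add: algebra_simps power2_eq_square)
  qed
  also have "\<dots> = (a+b) * (LINT w:{0..1}|lebesgue. m w) - a*b"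
    using int_m set_integrable_unit_const by (simp add: set_integral_unit_const)
  finally show "(LINT w:{0..1}|lebesgue. m w ^ 2) \<le> (a+b) * (LINT w:{0..1}|lebesgue. m w) - a*b" .
qed

text \<open>The bound is sharp: for every prescribed mean x \<in> [a,b] the function taking the value b
  on [0,t], t = (x-a)/(b-a), and a elsewhere has mean x and second moment (a+b) x - ab,
  because it only takes the two values where (v - a)(v - b) = 0.\<close>
definition two_point :: "real \<Rightarrow> real \<Rightarrow> real \<Rightarrow> real \<Rightarrow> real" where
  "two_point a b x = (\<lambda>w. a + (b - a) * indicator {0..(x - a) / (b - a)} w)"

lemma two_point_range: "a \<le> b \<Longrightarrow> a \<le> two_point a b x w \<and> two_point a b x w \<le> b"
  by (simp add: two_point_def indicator_def)

lemma two_point_measurable: "set_borel_measurable lebesgue {0..1} (two_point a b x)"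
  unfolding set_borel_measurable_def two_point_def by (intro measurable_completion) measurable

lemma two_point_integrable:
  assumes "0 < a" "a < b"
  shows "set_integrable lebesgue {0..1} (two_point a b x)"
    "set_integrable lebesgue {0..1} (\<lambda>w. two_point a b x w ^ 2)"
proof -
  have "\<And>w. a \<le> two_point a b x w \<and> two_point a b x w \<le> b"
    using assms(2) by (simp add: two_point_range)
  then show "set_integrable lebesgue {0..1} (two_point a b x)"
    "set_integrable lebesgue {0..1} (\<lambda>w. two_point a b x w ^ 2)"
    using second_moment_bound(1,2)[OF assms(1) two_point_measurable] by blast+
qed

lemma two_point_mean:
  assumes "a < b" "a \<le> x" "x \<le> b"
  shows "(LINT w:{0..1}|lebesgue. two_point a b x w) = x"
proof -
  define t where "t = (x - a) / (b - a)"
  have t: "0 \<le> t" "t \<le> 1" using assms by (auto simp: t_def field_simps)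
  have "set_integrable lebesgue {0..1::real} (indicator {0..t} :: real \<Rightarrow> real)"
    by (rule set_integrable_unit_bounded[of _ 1])
       (auto simp: set_borel_measurable_def indicator_def intro!: measurable_completion)
  then have "(LINT w:{0..1}|lebesgue. two_point a b x w) = a + (b - a) * t"
    using set_integrable_unit_const t
    by (simp add: two_point_def t_def[symmetric] set_integral_unit_const set_integral_unit_indicator)
  also have "\<dots> = x" using assms by (simp add: t_def)
  finally show ?thesis .
qed

lemma two_point_second_moment:
  assumes "0 < a" "a < b" "a \<le> x" "x \<le> b"
  shows "(LINT w:{0..1}|lebesgue. two_point a b x w ^ 2) = (a+b) * x - a*b"
proof -
  have "two_point a b x w ^ 2 = (a+b) * two_point a b x w - a*b" for w
    by (auto simp: two_point_def indicator_def algebra_simps power2_eq_square)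
  then have "(LINT w:{0..1}|lebesgue. two_point a b x w ^ 2)
               = (LINT w:{0..1}|lebesgue. (a+b) * two_point a b x w - a*b)" by simp
  also have "\<dots> = (a+b) * (LINT w:{0..1}|lebesgue. two_point a b x w) - a*b"
    using two_point_integrable(1)[OF assms(1,2)] set_integrable_unit_const
    by (simp add: set_integral_unit_const)
  finally show ?thesis using two_point_mean[OF assms(2-4)] by simp
qed

text \<open>Up to the factors 2 \<cdot> (midpoint), the denominator of \<psi> is the sum of the two
  second-moment bounds; it is positive on D (in fact whenever x \<ge> mu_m and y \<ge> sg_m).\<close>
lemma psi_alt:
  "psi mu_m mu_p sg_m sg_p h0 h1 x y =
     (h0 * x + h1 * y)^2 / (((mu_m + mu_p) * x - mu_m * mu_p) + ((sg_m + sg_p) * y - sg_m * sg_p))"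
proof -
  have "2 * ((mu_p + mu_m) / 2) * x + 2 * ((sg_p + sg_m) / 2) * y - mu_m * mu_p - sg_m * sg_p
          = ((mu_m + mu_p) * x - mu_m * mu_p) + ((sg_m + sg_p) * y - sg_m * sg_p)"
    by (simp add: field_simps)
  then show ?thesis unfolding psi_def by (simp only:)
qed

lemma psi_denominator_pos:
  fixes mu_m mu_p sg_m sg_p x y :: real
  assumes "0 < mu_m" "mu_m < mu_p" "0 < sg_m" "sg_m < sg_p" "mu_m \<le> x" "sg_m \<le> y"
  shows "0 < ((mu_m + mu_p) * x - mu_m * mu_p) + ((sg_m + sg_p) * y - sg_m * sg_p)"
proof -
  have "(mu_m + mu_p) * mu_m \<le> (mu_m + mu_p) * x" "(sg_m + sg_p) * sg_m \<le> (sg_m + sg_p) * y"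
    using assms by (simp_all add: mult_left_mono)
  moreover have "0 < mu_m * mu_m" "0 < sg_m * sg_m" using assms by simp_all
  ultimately show ?thesis by (simp add: algebra_simps)
qed

text \<open>Lower bound: the ratio of an admissible pair is at least \<psi> at its point of means,
  which lies in D.  The numerators agree and the denominator of the ratio is the smaller one.\<close>
lemma ratio_ge_psi_of_means:
  assumes "0 < mu_m" "mu_m < mu_p" "0 < sg_m" "sg_m < sg_p"
    and "admissible mu_m mu_p sg_m sg_p m s"
  defines "X \<equiv> LINT w:{0..1}|lebesgue. m w" and "Y \<equiv> LINT w:{0..1}|lebesgue. s w"
  shows "(X, Y) \<in> {mu_m..mu_p} \<times> {sg_m..sg_p}"
    and "psi mu_m mu_p sg_m sg_p h0 h1 X Y \<le> ratio h0 h1 m s"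
proof -
  have adm: "set_borel_measurable lebesgue {0..1} m" "set_borel_measurable lebesgue {0..1} s"
    "\<And>w. w \<in> {0..1} \<Longrightarrow> mu_m \<le> m w \<and> m w \<le> mu_p"
    "\<And>w. w \<in> {0..1} \<Longrightarrow> sg_m \<le> s w \<and> s w \<le> sg_p"
    using assms(5) unfolding admissible_def by auto
  note mom_m = second_moment_bound[OF assms(1) adm(1,3)]
  note mom_s = second_moment_bound[OF assms(3) adm(2,4)]
  show "(X, Y) \<in> {mu_m..mu_p} \<times> {sg_m..sg_p}"
    using mom_m mom_s by (simp add: X_def Y_def)
  define Q where "Q = (LINT w:{0..1}|lebesgue. m w ^ 2) + (LINT w:{0..1}|lebesgue. s w ^ 2)"
  have numerator: "(LINT w:{0..1}|lebesgue. h0 * m w + h1 * s w) = h0 * X + h1 * Y"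
    using mom_m(1) mom_s(1) by (simp add: X_def Y_def)
  have denominator: "(LINT w:{0..1}|lebesgue. (m w)^2 + (s w)^2) = Q"
    using mom_m(2) mom_s(2) by (simp add: Q_def)
  have "0 < mu_m^2" "0 < sg_m^2" using assms(1,3) by simp_all
  then have "0 < Q" using mom_m(5) mom_s(5) unfolding Q_def by linarith
  moreover have "Q \<le> ((mu_m + mu_p) * X - mu_m * mu_p) + ((sg_m + sg_p) * Y - sg_m * sg_p)"
    using mom_m(6) mom_s(6) by (simp add: Q_def X_def Y_def)
  ultimately show "psi mu_m mu_p sg_m sg_p h0 h1 X Y \<le> ratio h0 h1 m s"
    unfolding psi_alt ratio_def numerator denominator
    by (intro divide_left_mono) (auto intro: mult_pos_pos)
qed

lemma ratio_two_point:
  assumes "0 < mu_m" "mu_m < mu_p" "0 < sg_m" "sg_m < sg_p"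
    and "(x, y) \<in> {mu_m..mu_p} \<times> {sg_m..sg_p}"
  shows "admissible mu_m mu_p sg_m sg_p (two_point mu_m mu_p x) (two_point sg_m sg_p y)"
    and "ratio h0 h1 (two_point mu_m mu_p x) (two_point sg_m sg_p y) =
           psi mu_m mu_p sg_m sg_p h0 h1 x y"
proof -
  show "admissible mu_m mu_p sg_m sg_p (two_point mu_m mu_p x) (two_point sg_m sg_p y)"
    using assms by (simp add: admissible_def two_point_measurable two_point_range)
  have xy: "mu_m \<le> x" "x \<le> mu_p" "sg_m \<le> y" "y \<le> sg_p" using assms(5) by auto
  note int_m = two_point_integrable[OF assms(1,2), of x]
  note int_s = two_point_integrable[OF assms(3,4), of y]
  show "ratio h0 h1 (two_point mu_m mu_p x) (two_point sg_m sg_p y) =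
          psi mu_m mu_p sg_m sg_p h0 h1 x y"
    using int_m int_s assms(2,4)
    by (simp add: ratio_def psi_alt two_point_mean two_point_second_moment assms(1-4) xy)
qed

lemma psi_attains_min:
  assumes "0 < mu_m" "mu_m < mu_p" "0 < sg_m" "sg_m < sg_p"
  defines "D \<equiv> {mu_m..mu_p} \<times> {sg_m..sg_p}"
  obtains x0 y0 where "(x0, y0) \<in> D"
    "\<And>x y. (x, y) \<in> D \<Longrightarrow> psi mu_m mu_p sg_m sg_p h0 h1 x0 y0 \<le> psi mu_m mu_p sg_m sg_p h0 h1 x y"
proof -
  have "continuous_on D (\<lambda>p. psi mu_m mu_p sg_m sg_p h0 h1 (fst p) (snd p))"
    unfolding psi_alt D_def
    by (intro continuous_intros) (use psi_denominator_pos[OF assms(1-4)] in fastforce)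
  moreover have "compact D" "D \<noteq> {}" using assms by (auto simp: D_def intro: compact_Times)
  ultimately obtain p0 where "p0 \<in> D"
    "\<forall>p\<in>D. psi mu_m mu_p sg_m sg_p h0 h1 (fst p0) (snd p0) \<le> psi mu_m mu_p sg_m sg_p h0 h1 (fst p) (snd p)"
    using continuous_attains_inf by blast
  then show ?thesis using that[of "fst p0" "snd p0"] by fastforce
qed

theorem mainTheorem3:
  fixes mu_m mu_p sg_m sg_p h0 h1 :: real
  assumes "0 < mu_m" "mu_m < mu_p" "0 < sg_m" "sg_m < sg_p"
  defines "D \<equiv> {mu_m..mu_p} \<times> {sg_m..sg_p}"
  defines "M \<equiv> {(m, s). admissible mu_m mu_p sg_m sg_p m s}"
  shows "\<exists>(x0, y0)\<in>D.
           (\<forall>(x, y)\<in>D. psi mu_m mu_p sg_m sg_p h0 h1 x0 y0 \<le> psi mu_m mu_p sg_m sg_p h0 h1 x y) \<and>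
           (INF (m, s)\<in>M. ratio h0 h1 m s) = psi mu_m mu_p sg_m sg_p h0 h1 x0 y0 \<and>
           (\<exists>(m, s)\<in>M. ratio h0 h1 m s = psi mu_m mu_p sg_m sg_p h0 h1 x0 y0)"
proof -
  let ?psi = "psi mu_m mu_p sg_m sg_p h0 h1"
  obtain x0 y0 where p0: "(x0, y0) \<in> D" and min: "\<And>x y. (x, y) \<in> D \<Longrightarrow> ?psi x0 y0 \<le> ?psi x y"
    using psi_attains_min[OF assms(1-4)] unfolding D_def by blast
  define m0 s0 where "m0 = two_point mu_m mu_p x0" and "s0 = two_point sg_m sg_p y0"
  have attained: "(m0, s0) \<in> M" "ratio h0 h1 m0 s0 = ?psi x0 y0"
    using ratio_two_point[OF assms(1-4) p0[unfolded D_def]] by (simp_all add: M_def m0_def s0_def)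
  have lower: "?psi x0 y0 \<le> ratio h0 h1 m s" if "(m, s) \<in> M" for m s
  proof -
    have adm: "admissible mu_m mu_p sg_m sg_p m s" using that by (simp add: M_def)
    show ?thesis
      using min[OF ratio_ge_psi_of_means(1)[OF assms(1-4) adm, folded D_def]]
        ratio_ge_psi_of_means(2)[OF assms(1-4) adm]
      by (rule order_trans)
  qed
  have "(INF (m, s)\<in>M. ratio h0 h1 m s) = ?psi x0 y0"
    by (rule cInf_eq_minimum) (use attained lower in \<open>auto intro!: image_eqI[of _ _ "(m0, s0)"]\<close>)
  then show ?thesis using p0 min attained by blast
qed

end
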